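(* Let $(G,\mathcal{T},(A^\circ,B^\circ),k)$ be a Terminal Separation instance, let $\mathcal{T}'\subseteq\mathcal{T}$ be the set of terminal pairs disjoint from $A^\circ\cup B^\circ$, and let $\{s,t\}\in\mathcal{T}'$. Let $(A_s,B_t)$ be a terminal separation of minimum cost among those extending $(A^\circ\cup\{s\},B^\circ\cup\{t\})$, and $(A_t,B_s)$ a terminal separation of minimum cost among those extending $(A^\circ\cup\{t\},B^\circ\cup\{s\})$. Suppose that neither $(A_s,B_t)$ nor $(A_t,B_s)$ contains in $A\cup B$ any terminal pair of $\mathcal{T}'$ other than $\{s,t\}$. Then for every set $A$ with $A^\circ\cup\{s\}\subseteq A\subseteq V(G)\setminus B^\circ$ whose only terminal from pairs of $\mathcal{T}'$ is $s$, we have $d(A)-d(A^\circ)\ge d(A_s)-d(A^\circ)$; and symmetrically, for every set $B$ with $B^\circ\cup\{s\}\subseteq B\subseteq V(G)\setminus A^\circ$ whose only terminal from pairs of $\mathcal{T}'$ is $s$, we have $d(B)-d(B^\circ)\ge d(B_s)-d(B^\circ)$.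
   Context: Graphs may have multiple edges but no loops; $d(X)$ is the number of edges with exactly one endpoint in $X$. For a family $\mathcal{T}$ of pairwise disjoint vertex pairs (terminals are their vertices), a terminal separation is a pair $(A,B)$ of disjoint vertex sets such that each pair in $\mathcal{T}$ either has one vertex in $A$ and one in $B$ or is disjoint from $A\cup B$; $(A',B')$ extends $(A,B)$ if $A\subseteq A'$, $B\subseteq B'$; cost $c(A,B)=(d(A)+d(B))/2$. A Terminal Separation instance $(G,\mathcal{T},(A^\circ,B^\circ),k)$ has every terminal of degree at most one and $(A^\circ,B^\circ)$ a terminal separation. *)

theory Defs
  imports Complex_Main "HOL-Library.Multiset"
begin

definition multigraph :: "'a set \<Rightarrow> 'a set multiset \<Rightarrow> bool" where
  "multigraph V E \<longleftrightarrow> finite V \<and> (\<forall>e \<in># E. e \<subseteq> V \<and> card e = 2)"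

definition dcut :: "'a set multiset \<Rightarrow> 'a set \<Rightarrow> nat" where
  "dcut E X = size (filter_mset (\<lambda>e. card (e \<inter> X) = 1) E)"

definition degree :: "'a set multiset \<Rightarrow> 'a \<Rightarrow> nat" where
  "degree E v = size (filter_mset (\<lambda>e. v \<in> e) E)"

definition terminal_pairs :: "'a set \<Rightarrow> 'a set set \<Rightarrow> bool" where
  "terminal_pairs V T \<longleftrightarrow> (\<forall>p \<in> T. p \<subseteq> V \<and> card p = 2) \<and>
     (\<forall>p \<in> T. \<forall>q \<in> T. p \<noteq> q \<longrightarrow> p \<inter> q = {})"

definition terminals :: "'a set set \<Rightarrow> 'a set" where
  "terminals T = \<Union>T"

definition terminal_sep :: "'a set \<Rightarrow> 'a set set \<Rightarrow> 'a set \<Rightarrow> 'a set \<Rightarrow> bool" where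
  "terminal_sep V T A B \<longleftrightarrow> A \<subseteq> V \<and> B \<subseteq> V \<and> A \<inter> B = {} \<and>
     (\<forall>p \<in> T. (card (p \<inter> A) = 1 \<and> card (p \<inter> B) = 1) \<or> p \<inter> (A \<union> B) = {})"

definition extends :: "'a set \<Rightarrow> 'a set \<Rightarrow> 'a set \<Rightarrow> 'a set \<Rightarrow> bool" where
  "extends A' B' A B \<longleftrightarrow> A \<subseteq> A' \<and> B \<subseteq> B'"

definition cost :: "'a set multiset \<Rightarrow> 'a set \<Rightarrow> 'a set \<Rightarrow> real" where
  "cost E A B = (real (dcut E A) + real (dcut E B)) / 2"

definition min_ext_sep ::
  "'a set \<Rightarrow> 'a set multiset \<Rightarrow> 'a set set \<Rightarrow> 'a set \<Rightarrow> 'a set \<Rightarrow> 'a set \<Rightarrow> 'a set \<Rightarrow> bool" where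
  "min_ext_sep V E T A0 B0 A B \<longleftrightarrow> terminal_sep V T A B \<and> extends A B A0 B0 \<and>
     (\<forall>A' B'. terminal_sep V T A' B' \<and> extends A' B' A0 B0 \<longrightarrow> cost E A B \<le> cost E A' B')"

definition TS_instance ::
  "'a set \<Rightarrow> 'a set multiset \<Rightarrow> 'a set set \<Rightarrow> 'a set \<Rightarrow> 'a set \<Rightarrow> nat \<Rightarrow> bool" where
  "TS_instance V E T A0 B0 k \<longleftrightarrow> multigraph V E \<and> terminal_pairs V T \<and>
     (\<forall>v \<in> terminals T. degree E v \<le> 1) \<and> terminal_sep V T A0 B0"

end

theory Submission
  imports Defs
begin

(* The cut function d is posimodular: d(X - Y) + d(Y - X) <= d(X) + d(Y).
   Given A as in the claim and the minimum separation (As, Bt), uncross them into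
   (A - Bt, Bt - A). Since A contains no terminal of an untouched pair other than s, and
   (As, Bt) contains no such pair completely, every terminal pair is still separated or
   avoided, so (A - Bt, Bt - A) competes with (As, Bt). Minimality and posimodularity give
   d(As) + d(Bt) <= d(A - Bt) + d(Bt - A) <= d(A) + d(Bt), i.e. d(As) <= d(A).
   The claim for B is the same argument with the two sides swapped. *)

lemma card_Int_doubleton_eq_1_iff:
  assumes "a \<noteq> b"
  shows "card ({a, b} \<inter> S) = 1 \<longleftrightarrow> (a \<in> S) \<noteq> (b \<in> S)"
proof (cases "a \<in> S"; cases "b \<in> S")
  assume "a \<in> S" "b \<in> S"
  then show ?thesis using assms by (simp add: Int_absorb2)
next
  assume "a \<in> S" "b \<notin> S"
  then have "{a, b} \<inter> S = {a}" by auto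
  then show ?thesis using \<open>a \<in> S\<close> \<open>b \<notin> S\<close> by simp
next
  assume "a \<notin> S" "b \<in> S"
  then have "{a, b} \<inter> S = {b}" by auto
  then show ?thesis using \<open>a \<notin> S\<close> \<open>b \<in> S\<close> by simp
next
  assume "a \<notin> S" "b \<notin> S"
  then have "{a, b} \<inter> S = {}" by auto
  then show ?thesis using \<open>a \<notin> S\<close> \<open>b \<notin> S\<close> by simp
qed

lemma dcut_empty [simp]: "dcut {#} X = 0"
  by (simp add: dcut_def)

lemma dcut_add_mset [simp]: "dcut (add_mset e E) X = dcut E X + of_bool (card (e \<inter> X) = 1)"
  by (simp add: dcut_def)

lemma edge_crosses_Diff_posimodular:
  assumes "card e = 2"
  shows "of_bool (card (e \<inter> (X - Y)) = 1) + of_bool (card (e \<inter> (Y - X)) = 1)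
     \<le> of_bool (card (e \<inter> X) = 1) + (of_bool (card (e \<inter> Y) = 1) :: nat)"
proof -
  obtain u v where "e = {u, v}" "u \<noteq> v" using assms by (auto simp: card_2_iff)
  then have "\<And>S. card (e \<inter> S) = 1 \<longleftrightarrow> (u \<in> S) \<noteq> (v \<in> S)"
    using card_Int_doubleton_eq_1_iff by metis
  then show ?thesis by (simp only:) auto
qed

lemma dcut_Diff_posimodular:
  assumes "\<forall>e \<in># E. card e = 2"
  shows "dcut E (X - Y) + dcut E (Y - X) \<le> dcut E X + dcut E Y"
  using assms
proof (induction E)
  case empty
  then show ?case by simp
next
  case (add e E)
  then show ?case using edge_crosses_Diff_posimodular[of e X Y] by simp
qed

lemma terminal_sep_swap: "terminal_sep V T B A \<longleftrightarrow> terminal_sep V T A B"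
  unfolding terminal_sep_def by (auto simp: Un_commute)

lemma min_ext_sep_swap:
  assumes "min_ext_sep V E T A0 B0 A B"
  shows "min_ext_sep V E T B0 A0 B A"
  unfolding min_ext_sep_def extends_def
proof (intro conjI allI impI)
  show "terminal_sep V T B A" "B0 \<subseteq> B" "A0 \<subseteq> A"
    using assms terminal_sep_swap unfolding min_ext_sep_def extends_def by auto
next
  fix A' B' assume "terminal_sep V T A' B' \<and> B0 \<subseteq> A' \<and> A0 \<subseteq> B'"
  then have "cost E A B \<le> cost E B' A'"
    using assms terminal_sep_swap unfolding min_ext_sep_def extends_def by blast
  then show "cost E B A \<le> cost E A' B'" unfolding cost_def by (simp add: add.commute)
qed

lemma terminal_sep_pairE:
  assumes sep: "terminal_sep V T A B" and p: "p \<in> T" "card p = 2" "p \<inter> (A \<union> B) \<noteq> {}"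
  obtains a b where "p = {a, b}" "a \<in> A" "b \<in> B"
proof -
  have "card (p \<inter> A) = 1" "card (p \<inter> B) = 1" and "A \<inter> B = {}"
    using sep p unfolding terminal_sep_def by auto
  then obtain a b where a: "p \<inter> A = {a}" and b: "p \<inter> B = {b}"
    by (auto simp: card_1_singleton_iff)
  with \<open>A \<inter> B = {}\<close> have "a \<noteq> b" by blast
  have "{a, b} \<subseteq> p" "finite p" using a b \<open>card p = 2\<close> card.infinite by fastforce+
  then have "p = {a, b}" using \<open>card p = 2\<close> \<open>a \<noteq> b\<close> by (metis card_subset_eq card_2_iff)
  with a b show thesis using that by blast
qed

lemma separated_doubleton:
  assumes "a \<in> A" "a \<notin> B" "b \<in> B" "b \<notin> A"
  shows "card ({a, b} \<inter> A) = 1 \<and> card ({a, b} \<inter> B) = 1"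
proof -
  have "a \<noteq> b" using assms by auto
  then show ?thesis using assms by (simp add: card_Int_doubleton_eq_1_iff)
qed

lemma min_ext_sep_dcut_le_uncrossed:
  assumes min: "min_ext_sep V E T A0 B0 As Bt"
    and edges: "\<forall>e \<in># E. card e = 2"
    and sep: "terminal_sep V T (A - Bt) (Bt - A)"
    and ext: "A0 \<subseteq> A - Bt" "B0 \<subseteq> Bt - A"
  shows "dcut E As \<le> dcut E A"
proof -
  have "cost E As Bt \<le> cost E (A - Bt) (Bt - A)"
    using min sep ext unfolding min_ext_sep_def extends_def by blast
  then have "dcut E As + dcut E Bt \<le> dcut E (A - Bt) + dcut E (Bt - A)"
    unfolding cost_def by simp
  also have "\<dots> \<le> dcut E A + dcut E Bt"
    using dcut_Diff_posimodular[OF edges] .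
  finally show ?thesis by simp
qed

lemma terminal_sep_uncross:
  fixes T :: "'a set set" and A0 B0 :: "'a set"
  defines "T' \<equiv> {p \<in> T. p \<inter> (A0 \<union> B0) = {}}"
  assumes tp: "terminal_pairs V T" and sep0: "terminal_sep V T A0 B0"
    and st: "{s, t} \<in> T'"
    and sep: "terminal_sep V T As Bt" and ext: "A0 \<union> {s} \<subseteq> As" "B0 \<union> {t} \<subseteq> Bt"
    and only_s: "\<forall>p \<in> T'. p \<noteq> {s, t} \<longrightarrow> \<not> p \<subseteq> As \<union> Bt"
    and A: "A0 \<union> {s} \<subseteq> A" "A \<subseteq> V - B0" "A \<inter> terminals T' = {s}"
  shows "terminal_sep V T (A - Bt) (Bt - A)"
  unfolding terminal_sep_def
proof (intro conjI ballI)
  show "A - Bt \<subseteq> V" "Bt - A \<subseteq> V" "(A - Bt) \<inter> (Bt - A) = {}"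
    using A sep unfolding terminal_sep_def by auto
next
  have card2: "\<And>p. p \<in> T \<Longrightarrow> card p = 2"
    using tp unfolding terminal_pairs_def by auto
  have disjAsBt: "As \<inter> Bt = {}" using sep unfolding terminal_sep_def by auto
  have "t \<in> terminals T'" "s \<noteq> t"
    using st card2[of "{s, t}"] unfolding T'_def terminals_def by auto
  then have "t \<notin> A" using A(3) by auto
  fix p assume p: "p \<in> T"
  consider (touched) "p \<inter> (A0 \<union> B0) \<noteq> {}" | (st) "p = {s, t}" | (other) "p \<in> T'" "p \<noteq> {s, t}"
    using p unfolding T'_def by blast
  then show "card (p \<inter> (A - Bt)) = 1 \<and> card (p \<inter> (Bt - A)) = 1 \<or> p \<inter> (A - Bt \<union> (Bt - A)) = {}"
  proof cases
    case touched
    then obtain a b where "p = {a, b}" "a \<in> A0" "b \<in> B0"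
      using terminal_sep_pairE[OF sep0 p card2[OF p]] by metis
    moreover have "a \<in> A - Bt" "b \<in> Bt - A"
      using \<open>a \<in> A0\<close> \<open>b \<in> B0\<close> A ext disjAsBt by auto
    ultimately show ?thesis using separated_doubleton[of a "A - Bt" "Bt - A" b] by auto
  next
    case st
    have "s \<in> A - Bt" "t \<in> Bt - A" using A ext disjAsBt \<open>t \<notin> A\<close> by auto
    then show ?thesis using st separated_doubleton[of s "A - Bt" "Bt - A" t] by auto
  next
    case other
    have "p \<inter> {s, t} = {}"
      using tp p st other(2) unfolding terminal_pairs_def T'_def by auto
    then have "p \<inter> A = {}" using A(3) other(1) unfolding terminals_def by auto
    moreover have "p \<inter> (As \<union> Bt) = {}"
    proof (rule ccontr)
      assume "p \<inter> (As \<union> Bt) \<noteq> {}"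
      then obtain a b where "p = {a, b}" "a \<in> As" "b \<in> Bt"
        using terminal_sep_pairE[OF sep p card2[OF p]] by metis
      then show False using only_s other by auto
    qed
    ultimately show ?thesis by auto
  qed
qed

lemma min_ext_sep_dcut_le:
  fixes T :: "'a set set" and A0 B0 :: "'a set"
  defines "T' \<equiv> {p \<in> T. p \<inter> (A0 \<union> B0) = {}}"
  assumes tp: "terminal_pairs V T" and sep0: "terminal_sep V T A0 B0"
    and edges: "\<forall>e \<in># E. card e = 2"
    and st: "{s, t} \<in> T'"
    and min: "min_ext_sep V E T (A0 \<union> {s}) (B0 \<union> {t}) As Bt"
    and only_s: "\<forall>p \<in> T'. p \<noteq> {s, t} \<longrightarrow> \<not> p \<subseteq> As \<union> Bt"
    and A: "A0 \<union> {s} \<subseteq> A" "A \<subseteq> V - B0" "A \<inter> terminals T' = {s}"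
  shows "dcut E As \<le> dcut E A"
proof -
  have sep: "terminal_sep V T As Bt" and ext: "A0 \<union> {s} \<subseteq> As" "B0 \<union> {t} \<subseteq> Bt"
    using min unfolding min_ext_sep_def extends_def by auto
  have "t \<in> terminals T'" using st unfolding terminals_def by blast
  moreover have "card {s, t} = 2" using st tp unfolding T'_def terminal_pairs_def by blast
  then have "s \<noteq> t" by (cases "s = t") auto
  ultimately have "t \<notin> A" using A(3) by auto
  have "As \<inter> Bt = {}" using sep unfolding terminal_sep_def by blast
  then have "A0 \<union> {s} \<subseteq> A - Bt" "B0 \<union> {t} \<subseteq> Bt - A"
    using A(1,2) ext \<open>t \<notin> A\<close> by auto
  moreover have "terminal_sep V T (A - Bt) (Bt - A)"
    using terminal_sep_uncross[OF tp sep0 st[unfolded T'_def] sep ext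
        only_s[unfolded T'_def] A[unfolded T'_def]] .
  ultimately show ?thesis
    using min_ext_sep_dcut_le_uncrossed[OF min edges] by blast
qed

theorem lemma5p2:
  fixes V :: "'a set" and E :: "'a set multiset" and T :: "'a set set"
    and A0 B0 As Bt At Bs :: "'a set" and k :: nat and s t :: 'a
  defines "T' \<equiv> {p \<in> T. p \<inter> (A0 \<union> B0) = {}}"
  assumes inst: "TS_instance V E T A0 B0 k"
    and st: "{s, t} \<in> T'"
    and min_s: "min_ext_sep V E T (A0 \<union> {s}) (B0 \<union> {t}) As Bt"
    and min_t: "min_ext_sep V E T (A0 \<union> {t}) (B0 \<union> {s}) At Bs"
    and only_s: "\<forall>p \<in> T'. p \<noteq> {s, t} \<longrightarrow> \<not> p \<subseteq> As \<union> Bt"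
    and only_t: "\<forall>p \<in> T'. p \<noteq> {s, t} \<longrightarrow> \<not> p \<subseteq> At \<union> Bs"
  shows "(\<forall>A. A0 \<union> {s} \<subseteq> A \<and> A \<subseteq> V - B0 \<and> A \<inter> terminals T' = {s} \<longrightarrow>
            int (dcut E A) - int (dcut E A0) \<ge> int (dcut E As) - int (dcut E A0))
       \<and> (\<forall>B. B0 \<union> {s} \<subseteq> B \<and> B \<subseteq> V - A0 \<and> B \<inter> terminals T' = {s} \<longrightarrow>
            int (dcut E B) - int (dcut E B0) \<ge> int (dcut E Bs) - int (dcut E B0))"
proof -
  have tp: "terminal_pairs V T" and sep0: "terminal_sep V T A0 B0"
    and edges: "\<forall>e \<in># E. card e = 2"
    using inst unfolding TS_instance_def multigraph_def by auto
  have T'_swap: "T' = {p \<in> T. p \<inter> (B0 \<union> A0) = {}}"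
    unfolding T'_def by (auto simp: Un_commute)
  have "dcut E As \<le> dcut E A"
    if "A0 \<union> {s} \<subseteq> A" "A \<subseteq> V - B0" "A \<inter> terminals T' = {s}" for A
    using min_ext_sep_dcut_le[OF tp sep0 edges st[unfolded T'_def] min_s
        only_s[unfolded T'_def] that[unfolded T'_def]] .
  moreover have "dcut E Bs \<le> dcut E B"
    if "B0 \<union> {s} \<subseteq> B" "B \<subseteq> V - A0" "B \<inter> terminals T' = {s}" for B
  proof -
    have "\<forall>p \<in> T'. p \<noteq> {s, t} \<longrightarrow> \<not> p \<subseteq> Bs \<union> At"
      using only_t by (simp add: Un_commute)
    then show ?thesis
      using min_ext_sep_dcut_le[OF tp terminal_sep_swap[THEN iffD2, OF sep0] edges
          st[unfolded T'_swap] min_ext_sep_swap[OF min_t] _ that[unfolded T'_swap]]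
      unfolding T'_swap by blast
  qed
  ultimately show ?thesis by auto
qed

end
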